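(* Let $3\le n\le k$ be integers and $g:\mathbb{N}\to\mathbb{R}$. For $j=1,\dots,n-1$ and $\mathbf{r}=(r_1,\dots,r_{n-1})$ define $$f_j(\mathbf{r})=\sum_{l=1}^{j}\mathds{1}_{\{r_l=1\}}\frac{(|\mathbf{r}|-1)!}{r_1!\cdots r_{n-1}!}\Big(\frac1k\Big)^{|\mathbf{r}|}g(r_{n-1}),$$ and for $i=1,\dots,n-1$ let $N_i=r_i+\dots+r_{n-1}$. Then for $j=1,\dots,n-2$, $$\sum_{\mathbf{r}\in E_j}f_j(\mathbf{r})=\sum_{l=1}^{j}\binom{j}{l}\frac{l}{k^l}\sum_{\substack{r_{l+1}\ge2,\dots,r_j\ge2\\ r_{j+1}\ge0,\dots,r_{n-1}\ge0}}\frac{(l-1+N_{l+1})!}{r_{l+1}!\cdots r_{n-1}!}\Big(\frac1k\Big)^{N_{l+1}}g(r_{n-1})$$ for any $g$ such that the right-hand side is finite. Moreover, this identity also holds for $j=n-1$ when $g(i)=1$ for all $i\in\mathbb{N}$, provided the right-hand side is finite.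
   Context: $\mathbb{N}=\{0,1,2,\dots\}$, $|\mathbf{r}|=r_1+\dots+r_{n-1}$, $0!=1$. For $j=1,\dots,n-1$, $E_j$ is the set of $\mathbf{r}\in\mathbb{N}^{n-1}$ such that $r_i\ge1$ for $1\le i\le j$, $r_l\ge0$ for $j+1\le l\le n-1$, and $\prod_{i=1}^{j}(r_i-1)=0$ (i.e. at least one of $r_1,\dots,r_j$ equals $1$). In the inner sum on the right, the constraint set $\{r_{l+1}\ge2,\dots,r_j\ge2\}$ is empty when $l=j$; for $j=n-1$ the constraints $r_{j+1},\dots,r_{n-1}\ge0$ are vacuous and $N_{n}=0$. *)

theory Defs
  imports "HOL-Analysis.Analysis"
begin

text \<open>Vectors r = (r_1,...,r_{n-1}) in N^{n-1} are represented as functions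
  nat => nat that vanish outside the index range {1..n-1}.\<close>

definition absr :: "nat \<Rightarrow> (nat \<Rightarrow> nat) \<Rightarrow> nat" where
  "absr n r = (\<Sum>i=1..n-1. r i)"

definition Eset :: "nat \<Rightarrow> nat \<Rightarrow> (nat \<Rightarrow> nat) set" where
  "Eset n j = {r. (\<forall>i. (i < 1 \<or> n - 1 < i) \<longrightarrow> r i = 0)
                \<and> (\<forall>i\<in>{1..j}. 1 \<le> r i)
                \<and> (\<Prod>i=1..j. (r i - 1)) = 0}"

definition fj :: "nat \<Rightarrow> nat \<Rightarrow> (nat \<Rightarrow> real) \<Rightarrow> nat \<Rightarrow> (nat \<Rightarrow> nat) \<Rightarrow> real" where
  "fj n k g j r = (\<Sum>l=1..j. (if r l = 1 then 1 else 0)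
      * (fact (absr n r - 1) / (\<Prod>i=1..n-1. fact (r i)))
      * (1 / real k) ^ absr n r * g (r (n - 1)))"

definition Ntail :: "nat \<Rightarrow> nat \<Rightarrow> (nat \<Rightarrow> nat) \<Rightarrow> nat" where
  "Ntail n i r = (\<Sum>m=i..n-1. r m)"

definition Inner :: "nat \<Rightarrow> nat \<Rightarrow> nat \<Rightarrow> (nat \<Rightarrow> nat) set" where
  "Inner n j l = {r. (\<forall>i. (i < l + 1 \<or> n - 1 < i) \<longrightarrow> r i = 0)
                    \<and> (\<forall>i\<in>{l+1..j}. 2 \<le> r i)}"

definition inner_term :: "nat \<Rightarrow> nat \<Rightarrow> (nat \<Rightarrow> real) \<Rightarrow> nat \<Rightarrow> (nat \<Rightarrow> nat) \<Rightarrow> real" where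
  "inner_term n k g l r = fact (l - 1 + Ntail n (l + 1) r) / (\<Prod>i=l+1..n-1. fact (r i))
      * (1 / real k) ^ Ntail n (l + 1) r * g (r (n - 1))"

definition RHS :: "nat \<Rightarrow> nat \<Rightarrow> (nat \<Rightarrow> real) \<Rightarrow> nat \<Rightarrow> real" where
  "RHS n k g j = (\<Sum>l=1..j. real (j choose l) * real l / real k ^ l
      * infsum (inner_term n k g l) (Inner n j l))"

end

theory Submission
  imports Defs
begin

text \<open>Sort the vectors of E_j by the set S \<subseteq> {1..j} of positions carrying a 1, which is
  nonempty by the definition of E_j. If |S| = l, deleting these ones and relabelling the other
  positions of {1..j} as l+1..j is a bijection onto the index set of the l-th inner sum. Under it
  |r| = l + N_{l+1}, the factors 1! at S drop out, the indicator sum in f_j equals l, and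
  g(r_{n-1}) is unchanged: either position n-1 lies outside {1..j} or g is constant. Hence each
  class contributes l/k^l times the l-th inner sum, and there are (j choose l) classes with
  |S| = l.\<close>

lemma has_sum_UN_finite_disjoint:
  fixes f :: "'a \<Rightarrow> 'b::topological_comm_monoid_add"
  assumes "finite I" and "\<And>i. i \<in> I \<Longrightarrow> (f has_sum c i) (A i)"
    and "disjoint_family_on A I"
  shows "(f has_sum (\<Sum>i\<in>I. c i)) (\<Union>i\<in>I. A i)"
  using assms
proof (induction I rule: finite_induct)
  case empty
  then show ?case by simp
next
  case (insert x I)
  have "(f has_sum (c x + (\<Sum>i\<in>I. c i))) (A x \<union> (\<Union>i\<in>I. A i))"
    using insert by (intro has_sum_Un_disjoint) (auto simp: disjoint_family_on_def)
  then show ?case using insert by simp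
qed

lemma sum_nonempty_subsets_by_card:
  fixes c :: "nat \<Rightarrow> 'a::comm_semiring_1"
  assumes "finite A"
  shows "(\<Sum>S\<in>{S. S \<subseteq> A \<and> S \<noteq> {}}. c (card S)) = (\<Sum>l=1..card A. of_nat (card A choose l) * c l)"
proof -
  let ?P = "{S. S \<subseteq> A \<and> S \<noteq> {}}"
  have fin: "finite ?P"
    using assms by (auto intro: finite_subset[of _ "Pow A"])
  have "card S \<in> {1..card A}" if "S \<in> ?P" for S
    using that assms by (auto simp: Suc_le_eq card_gt_0_iff card_mono dest: finite_subset)
  then have "card ` ?P \<subseteq> {1..card A}"
    by blast
  then have "(\<Sum>S\<in>?P. c (card S)) = (\<Sum>l=1..card A. \<Sum>S\<in>{S\<in>?P. card S = l}. c (card S))"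
    by (rule sum.group[OF fin finite_atLeastAtMost, symmetric])
  also have "\<dots> = (\<Sum>l=1..card A. of_nat (card A choose l) * c l)"
  proof (rule sum.cong[OF refl])
    fix l assume "l \<in> {1..card A}"
    then have "{S\<in>?P. card S = l} = {S. S \<subseteq> A \<and> card S = l}"
      by auto
    moreover have "(\<Sum>S\<in>{S\<in>?P. card S = l}. c (card S)) = (\<Sum>S\<in>{S\<in>?P. card S = l}. c l)"
      by (rule sum.cong) auto
    ultimately show "(\<Sum>S\<in>{S\<in>?P. card S = l}. c (card S)) = of_nat (card A choose l) * c l"
      using n_subsets[OF assms, of l] by simp
  qed
  finally show ?thesis .
qed

definition ones_pos :: "nat \<Rightarrow> (nat \<Rightarrow> nat) \<Rightarrow> nat set" where
  "ones_pos j r = {i\<in>{1..j}. r i = 1}"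

definition Eset_ones_at :: "nat \<Rightarrow> nat \<Rightarrow> nat set \<Rightarrow> (nat \<Rightarrow> nat) set" where
  "Eset_ones_at n j S = {r \<in> Eset n j. ones_pos j r = S}"

lemma Eset_outside:
  assumes "r \<in> Eset n j" and "i < 1 \<or> n - 1 < i"
  shows "r i = 0"
proof -
  have "\<forall>i. (i < 1 \<or> n - 1 < i) \<longrightarrow> r i = 0"
    using assms(1) unfolding Eset_def mem_Collect_eq by (elim conjE)
  with assms(2) show ?thesis
    by (elim allE impE) auto
qed

lemma Eset_ge_1: "r \<in> Eset n j \<Longrightarrow> i \<in> {1..j} \<Longrightarrow> 1 \<le> r i"
  by (simp add: Eset_def)

lemma EsetI:
  assumes "\<And>i. i < 1 \<or> n - 1 < i \<Longrightarrow> r i = 0" and "\<And>i. i \<in> {1..j} \<Longrightarrow> 1 \<le> r i"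
    and "i \<in> {1..j}" and "r i = 1"
  shows "r \<in> Eset n j"
proof -
  have "(\<Prod>i=1..j. r i - 1) = 0"
    using assms(3,4) by (intro prod_zero bexI[of _ i]) auto
  with assms(1,2) show ?thesis
    unfolding Eset_def by blast
qed

lemma ones_pos_nonempty:
  assumes "r \<in> Eset n j"
  shows "ones_pos j r \<noteq> {}"
proof -
  have "(\<Prod>i=1..j. r i - 1) = 0" and pos: "\<forall>i\<in>{1..j}. 1 \<le> r i"
    using assms by (simp_all add: Eset_def)
  then obtain i where "i \<in> {1..j}" "r i \<le> 1"
    by (auto simp: prod_zero_iff)
  with pos have "i \<in> ones_pos j r"
    unfolding ones_pos_def using le_antisym by blast
  then show ?thesis
    by blast
qed

lemma Eset_eq_UN_Eset_ones_at:
  "Eset n j = (\<Union>S\<in>{S. S \<subseteq> {1..j} \<and> S \<noteq> {}}. Eset_ones_at n j S)"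
  using ones_pos_nonempty by (auto simp: Eset_ones_at_def ones_pos_def)

lemma disjoint_family_Eset_ones_at: "disjoint_family_on (Eset_ones_at n j) A"
  by (auto simp: disjoint_family_on_def Eset_ones_at_def)

lemma fj_eq_card_ones_pos:
  "fj n k g j r = real (card (ones_pos j r))
     * (fact (absr n r - 1) / (\<Prod>i=1..n-1. fact (r i)) * (1 / real k) ^ absr n r * g (r (n - 1)))"
proof -
  have "(\<Sum>l=1..j. if r l = 1 then 1 else 0 :: real) = real (card (ones_pos j r))"
    unfolding ones_pos_def by (simp add: sum.If_cases Int_def conj_commute)
  then show ?thesis
    unfolding fj_def sum_distrib_right[symmetric] by (simp add: mult.assoc)
qed

locale ones_relabelling =
  fixes n j :: nat and S :: "nat set" and \<tau> :: "nat \<Rightarrow> nat"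
  assumes S_subset: "S \<subseteq> {1..j}" and S_nonempty: "S \<noteq> {}" and j_le: "j \<le> n - 1"
    and \<tau>_bij: "bij_betw \<tau> ({1..j} - S) {card S + 1..j}"
begin

definition \<tau>_inv :: "nat \<Rightarrow> nat" where
  "\<tau>_inv = the_inv_into ({1..j} - S) \<tau>"

definition insert_ones :: "(nat \<Rightarrow> nat) \<Rightarrow> nat \<Rightarrow> nat" where
  "insert_ones s i = (if i \<in> S then 1 else if i \<in> {1..j} then s (\<tau> i) else s i)"

definition remove_ones :: "(nat \<Rightarrow> nat) \<Rightarrow> nat \<Rightarrow> nat" where
  "remove_ones r m = (if m \<in> {card S + 1..j} then r (\<tau>_inv m)
     else if j < m \<and> m \<le> n - 1 then r m else 0)"

lemma finite_S: "finite S"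
  using S_subset finite_subset by blast

lemma card_S_ge_1: "1 \<le> card S"
  using finite_S S_nonempty by (simp add: Suc_le_eq card_gt_0_iff)

lemma card_S_le: "card S \<le> j"
  using card_mono[OF finite_atLeastAtMost S_subset] by simp

lemma \<tau>_inv_mem: "m \<in> {card S + 1..j} \<Longrightarrow> \<tau>_inv m \<in> {1..j} - S"
  unfolding \<tau>_inv_def using \<tau>_bij bij_betw_the_inv_into bij_betwE by blast

lemma \<tau>_\<tau>_inv: "m \<in> {card S + 1..j} \<Longrightarrow> \<tau> (\<tau>_inv m) = m"
  unfolding \<tau>_inv_def using \<tau>_bij f_the_inv_into_f_bij_betw by metis

lemma \<tau>_mem: "i \<in> {1..j} - S \<Longrightarrow> \<tau> i \<in> {card S + 1..j}"
  using \<tau>_bij bij_betwE by blast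

lemma \<tau>_inv_\<tau>: "i \<in> {1..j} - S \<Longrightarrow> \<tau>_inv (\<tau> i) = i"
  unfolding \<tau>_inv_def using \<tau>_bij bij_betw_imp_inj_on the_inv_into_f_f by metis

lemma big_op_insert_ones:
  assumes "comm_monoid_set f z"
  shows "comm_monoid_set.F f z (\<lambda>i. h (insert_ones s i)) {1..n-1}
    = f (comm_monoid_set.F f z (\<lambda>_. h 1) S) (comm_monoid_set.F f z (\<lambda>m. h (s m)) {card S + 1..n-1})"
proof -
  interpret comm_monoid_set f z by fact
  let ?g = "\<lambda>i. h (insert_ones s i)"
  have domain: "{1..n-1} = S \<union> (({1..j} - S) \<union> {j+1..n-1})"
    using S_subset j_le by auto
  have "F ?g {1..n-1} = f (F ?g S) (F ?g (({1..j} - S) \<union> {j+1..n-1}))"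
    unfolding domain by (rule union_disjoint) (use finite_S S_subset in auto)
  also have "F ?g (({1..j} - S) \<union> {j+1..n-1}) = f (F ?g ({1..j} - S)) (F ?g {j+1..n-1})"
    by (rule union_disjoint) auto
  also have "F ?g S = F (\<lambda>_. h 1) S"
    by (rule cong) (simp_all add: insert_ones_def)
  also have "F ?g ({1..j} - S) = F (\<lambda>i. h (s (\<tau> i))) ({1..j} - S)"
    by (rule cong) (simp_all add: insert_ones_def)
  also have "\<dots> = F (\<lambda>m. h (s m)) {card S + 1..j}"
    by (rule reindex_bij_betw[OF \<tau>_bij])
  also have "F ?g {j+1..n-1} = F (\<lambda>m. h (s m)) {j+1..n-1}"
    using S_subset by (intro cong) (auto simp: insert_ones_def)
  also have "f (F (\<lambda>m. h (s m)) {card S + 1..j}) (F (\<lambda>m. h (s m)) {j+1..n-1})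
      = F (\<lambda>m. h (s m)) {card S + 1..n-1}"
    using card_S_le j_le by (subst union_disjoint[symmetric]) (auto intro: arg_cong[where f = "F _"])
  finally show ?thesis
    by (simp add: assoc)
qed

lemma absr_insert_ones: "absr n (insert_ones s) = card S + Ntail n (card S + 1) s"
  using big_op_insert_ones[OF sum.comm_monoid_set_axioms, of "\<lambda>x. x" s, folded sum_def]
  by (simp add: absr_def Ntail_def)

lemma prod_fact_insert_ones:
  "(\<Prod>i=1..n-1. fact (insert_ones s i) :: real) = (\<Prod>m=card S + 1..n-1. fact (s m))"
  using big_op_insert_ones[OF prod.comm_monoid_set_axioms, of "\<lambda>x. fact x :: real" s, folded prod_def]
  by simp

lemma insert_ones_outside: "i \<notin> {1..j} \<Longrightarrow> insert_ones s i = s i"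
  using S_subset by (auto simp: insert_ones_def)

lemma insert_ones_ge_2:
  assumes "s \<in> Inner n j (card S)" and "i \<in> {1..j} - S"
  shows "2 \<le> insert_ones s i"
proof -
  have "2 \<le> s (\<tau> i)"
    using assms(1) \<tau>_mem[OF assms(2)] unfolding Inner_def by blast
  then show ?thesis
    using assms(2) by (simp add: insert_ones_def)
qed

lemma ones_pos_insert_ones:
  assumes "s \<in> Inner n j (card S)"
  shows "ones_pos j (insert_ones s) = S"
  using S_subset insert_ones_ge_2[OF assms] by (force simp: ones_pos_def insert_ones_def)

lemma insert_ones_mem:
  assumes "s \<in> Inner n j (card S)"
  shows "insert_ones s \<in> Eset_ones_at n j S"
proof -
  obtain i where i: "i \<in> S"
    using S_nonempty by blast
  have "insert_ones s \<in> Eset n j"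
  proof (rule EsetI)
    show "insert_ones s i = 0" if "i < 1 \<or> n - 1 < i" for i
      using assms that j_le by (auto simp: Inner_def insert_ones_outside)
    show "1 \<le> insert_ones s i" if "i \<in> {1..j}" for i
      using insert_ones_ge_2[OF assms] that by (force simp: insert_ones_def)
    show "i \<in> {1..j}" "insert_ones s i = 1"
      using i S_subset by (auto simp: insert_ones_def)
  qed
  then show ?thesis
    using ones_pos_insert_ones[OF assms] by (simp add: Eset_ones_at_def)
qed

lemma remove_ones_insert_ones:
  assumes "s \<in> Inner n j (card S)"
  shows "remove_ones (insert_ones s) = s"
proof
  fix m
  show "remove_ones (insert_ones s) m = s m"
  proof (cases "m \<in> {card S + 1..j}")
    case True
    then show ?thesis
      using \<tau>_inv_mem[OF True] \<tau>_\<tau>_inv[OF True] by (simp add: remove_ones_def insert_ones_def)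
  next
    case False
    then show ?thesis
      using assms card_S_le by (auto simp: remove_ones_def Inner_def insert_ones_outside)
  qed
qed

lemma remove_ones_mem:
  assumes "r \<in> Eset_ones_at n j S"
  shows "remove_ones r \<in> Inner n j (card S)"
proof -
  have r: "r \<in> Eset n j" "ones_pos j r = S"
    using assms by (simp_all add: Eset_ones_at_def)
  have "2 \<le> r i" if "i \<in> {1..j} - S" for i
  proof -
    have "1 \<le> r i"
      using r(1) that by (blast intro: Eset_ge_1)
    moreover have "r i \<noteq> 1"
      using r(2) that unfolding ones_pos_def by blast
    ultimately show ?thesis
      by simp
  qed
  then show ?thesis
    using \<tau>_inv_mem card_S_le j_le by (auto simp: Inner_def remove_ones_def)
qed

lemma insert_ones_remove_ones:
  assumes "r \<in> Eset_ones_at n j S"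
  shows "insert_ones (remove_ones r) = r"
proof
  fix i
  have r: "r \<in> Eset n j" "ones_pos j r = S"
    using assms by (simp_all add: Eset_ones_at_def)
  consider (one) "i \<in> S" | (moved) "i \<in> {1..j} - S" | (outside) "i \<notin> {1..j}"
    using S_subset by blast
  then show "insert_ones (remove_ones r) i = r i"
  proof cases
    case one
    then have "r i = 1"
      using r(2) unfolding ones_pos_def by blast
    with one show ?thesis
      by (simp add: insert_ones_def)
  next
    case moved
    then show ?thesis
      using \<tau>_mem[OF moved] \<tau>_inv_\<tau>[OF moved] by (simp add: insert_ones_def remove_ones_def)
  next
    case outside
    have "r i = 0" if "i < 1 \<or> n - 1 < i"
      using r(1) that by (rule Eset_outside)
    with outside show ?thesis
      by (auto simp: insert_ones_outside remove_ones_def)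
  qed
qed

lemma fj_insert_ones:
  assumes s: "s \<in> Inner n j (card S)" and g: "j \<le> n - 2 \<or> (\<forall>i. g i = 1)"
  shows "fj n k g j (insert_ones s) = real (card S) / real k ^ card S * inner_term n k g (card S) s"
proof -
  let ?N = "Ntail n (card S + 1) s"
  have "n - 1 \<notin> {1..j}" if "j \<le> n - 2"
    using that card_S_ge_1 card_S_le by auto
  then have "g (insert_ones s (n - 1)) = g (s (n - 1))"
    using g by (auto simp: insert_ones_outside)
  moreover have "absr n (insert_ones s) - 1 = card S - 1 + ?N"
    using card_S_ge_1 by (simp add: absr_insert_ones)
  moreover have "(1 / real k) ^ absr n (insert_ones s) = 1 / real k ^ card S * (1 / real k) ^ ?N"
    by (simp add: absr_insert_ones power_add power_one_over)
  ultimately show ?thesis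
    unfolding fj_eq_card_ones_pos ones_pos_insert_ones[OF s] prod_fact_insert_ones inner_term_def
    by (simp add: mult_ac)
qed

lemma has_sum_Eset_ones_at:
  assumes "inner_term n k g (card S) summable_on Inner n j (card S)"
    and "j \<le> n - 2 \<or> (\<forall>i. g i = 1)"
  shows "(fj n k g j has_sum
           real (card S) / real k ^ card S * infsum (inner_term n k g (card S)) (Inner n j (card S)))
         (Eset_ones_at n j S)"
proof -
  let ?c = "real (card S) / real k ^ card S"
  have "((\<lambda>s. ?c * inner_term n k g (card S) s) has_sum ?c * infsum (inner_term n k g (card S)) (Inner n j (card S)))
      (Inner n j (card S))"
    using assms(1) by (intro has_sum_cmult_right has_sum_infsum)
  also have "?this \<longleftrightarrow> ?thesis"
    by (rule has_sum_reindex_bij_witness[where i = remove_ones and j = insert_ones])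
      (simp_all add: remove_ones_insert_ones insert_ones_mem insert_ones_remove_ones remove_ones_mem
        fj_insert_ones assms(2))
  finally show ?thesis .
qed

end

lemma ones_relabelling_exists:
  assumes "S \<subseteq> {1..j}" and "S \<noteq> {}" and "j \<le> n - 1"
  shows "\<exists>\<tau>. ones_relabelling n j S \<tau>"
proof -
  have "finite S"
    by (rule finite_subset[OF assms(1)]) simp
  with assms(1) have "card ({1..j} - S) = card {card S + 1..j}"
    by (simp add: card_Diff_subset)
  then have "\<exists>\<tau>. bij_betw \<tau> ({1..j} - S) {card S + 1..j}"
    by (intro finite_same_card_bij) simp_all
  then obtain \<tau> where "bij_betw \<tau> ({1..j} - S) {card S + 1..j}"
    by blast
  with assms show ?thesis
    by (intro exI[of _ \<tau>] ones_relabelling.intro)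
qed

theorem lemma7p2:
  fixes n k j :: nat and g :: "nat \<Rightarrow> real"
  assumes "3 \<le> n" and "n \<le> k"
    and "1 \<le> j" and "j \<le> n - 1"
    and "j \<le> n - 2 \<or> (\<forall>i. g i = 1)"
    and "\<forall>l\<in>{1..j}. inner_term n k g l summable_on Inner n j l"
  shows "(fj n k g j has_sum RHS n k g j) (Eset n j)"
proof -
  let ?P = "{S. S \<subseteq> {1..j} \<and> S \<noteq> {}}"
  define c where "c l = real l / real k ^ l * infsum (inner_term n k g l) (Inner n j l)" for l
  have "(fj n k g j has_sum c (card S)) (Eset_ones_at n j S)" if "S \<in> ?P" for S
  proof -
    from that have "S \<subseteq> {1..j}" "S \<noteq> {}"
      by simp_all
    then obtain \<tau> where \<tau>: "ones_relabelling n j S \<tau>"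
      using ones_relabelling_exists assms(4) by blast
    then have "card S \<in> {1..j}"
      using ones_relabelling.card_S_ge_1 ones_relabelling.card_S_le by simp
    with assms(6) have "inner_term n k g (card S) summable_on Inner n j (card S)"
      by blast
    then show ?thesis
      unfolding c_def by (rule ones_relabelling.has_sum_Eset_ones_at[OF \<tau> _ assms(5)])
  qed
  then have "(fj n k g j has_sum (\<Sum>S\<in>?P. c (card S))) (\<Union>S\<in>?P. Eset_ones_at n j S)"
    by (intro has_sum_UN_finite_disjoint disjoint_family_Eset_ones_at) auto
  also have "(\<Sum>S\<in>?P. c (card S)) = RHS n k g j"
    using sum_nonempty_subsets_by_card[of "{1..j}" c] by (simp add: RHS_def c_def mult.assoc)
  finally show ?thesis
    unfolding Eset_eq_UN_Eset_ones_at .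
qed

end
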